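(* The mixed dual estimate $\check{\Sigma}$ in the model $B(\check G) \cap M(G)$ is identical to the mixed dual estimate in the model ${\rm M}_+(G)=A(G)\cap M(G)$.
   Context: Let $G=(V,E)$ be an undirected graph on $V=\{1,\ldots,d\}$, $S$ a sample covariance matrix, $M(G)$ the Gaussian graphical model ($(\Sigma^{-1})_{ij}=0$ for $ij\notin E$), $A(G)$ the set of positive definite $\Sigma$ with $\Sigma_{ij}\ge 0$ for $ij\in E$, and ${\rm M}_+(G)=A(G)\cap M(G)$. Let $\widehat K$ be the MLE of $K=\Sigma^{-1}$ in $M(G)$, and let $\check\Sigma$ (the mixed dual estimate in ${\rm M}_+(G)$) be the minimizer of $-\log\det\Sigma+\operatorname{tr}(\Sigma\widehat K)$ over positive definite $\Sigma$ with $\Sigma_{ij}\geq 0$ for $ij\in E(G)$. Let $\check G$ be the graph whose edges are the pairs $ij$ with $\check\Sigma_{ij}\neq 0$. For a graph $H$, $B(H)$ denotes the covariance graph model of all covariance matrices with $\Sigma_{ij}=0$ for $ij\notin E(H)$. The mixed dual estimate in $B(\check G)\cap M(G)$ is obtained by first computing $\widehat K$ in $M(G)$ and then computing the dual likelihood estimate in $B(\check G)$ based on $\widehat K$ (minimizing $-\log\det\Sigma+\operatorname{tr}(\Sigma\widehat K)$ over $\Sigma\in B(\check G)$). *)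

theory Defs
  imports "HOL-Analysis.Analysis"
begin

text \<open>Vertices are the elements of a finite type 'n (playing the role of V = {1..d}).
  A graph is a symmetric, irreflexive edge relation E on 'n.\<close>

definition simple_graph :: "('n \<Rightarrow> 'n \<Rightarrow> bool) \<Rightarrow> bool" where
  "simple_graph E \<longleftrightarrow> (\<forall>i j. E i j \<longrightarrow> E j i) \<and> (\<forall>i. \<not> E i i)"

definition pos_def :: "real^'n^'n \<Rightarrow> bool" where
  "pos_def A \<longleftrightarrow> transpose A = A \<and> (\<forall>x. x \<noteq> 0 \<longrightarrow> x \<bullet> (A *v x) > 0)"

definition pos_semidef :: "real^'n^'n \<Rightarrow> bool" where
  "pos_semidef A \<longleftrightarrow> transpose A = A \<and> (\<forall>x. x \<bullet> (A *v x) \<ge> 0)"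

text \<open>Precision matrices K = Sigma^{-1} of the Gaussian graphical model M(G).\<close>
definition M_prec :: "('n \<Rightarrow> 'n \<Rightarrow> bool) \<Rightarrow> real^'n^'n \<Rightarrow> bool" where
  "M_prec E K \<longleftrightarrow> pos_def K \<and> (\<forall>i j. i \<noteq> j \<and> \<not> E i j \<longrightarrow> K $ i $ j = 0)"

definition A_model :: "('n \<Rightarrow> 'n \<Rightarrow> bool) \<Rightarrow> real^'n^'n \<Rightarrow> bool" where
  "A_model E S \<longleftrightarrow> pos_def S \<and> (\<forall>i j. E i j \<longrightarrow> S $ i $ j \<ge> 0)"

definition B_model :: "('n \<Rightarrow> 'n \<Rightarrow> bool) \<Rightarrow> real^'n^'n \<Rightarrow> bool" where
  "B_model H S \<longleftrightarrow> pos_def S \<and> (\<forall>i j. i \<noteq> j \<and> \<not> H i j \<longrightarrow> S $ i $ j = 0)"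

text \<open>Gaussian log-likelihood (up to constants and factor n/2) of K given S.\<close>
definition gauss_loglik :: "real^'n^'n \<Rightarrow> real^'n^'n \<Rightarrow> real" where
  "gauss_loglik S K = ln (det K) - trace (S ** K)"

definition is_MLE :: "('n \<Rightarrow> 'n \<Rightarrow> bool) \<Rightarrow> real^'n^'n \<Rightarrow> real^'n^'n \<Rightarrow> bool" where
  "is_MLE E S K \<longleftrightarrow> M_prec E K \<and> (\<forall>K'. M_prec E K' \<longrightarrow> gauss_loglik S K' \<le> gauss_loglik S K)"

definition dual_obj :: "real^'n^'n \<Rightarrow> real^'n^'n \<Rightarrow> real" where
  "dual_obj K S = - ln (det S) + trace (S ** K)"

definition is_dual_est :: "(real^'n^'n \<Rightarrow> bool) \<Rightarrow> real^'n^'n \<Rightarrow> real^'n^'n \<Rightarrow> bool" where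
  "is_dual_est C K S \<longleftrightarrow> C S \<and> (\<forall>S'. C S' \<longrightarrow> dual_obj K S \<le> dual_obj K S')"

definition supp_graph :: "real^'n^'n \<Rightarrow> 'n \<Rightarrow> 'n \<Rightarrow> bool" where
  "supp_graph S i j \<longleftrightarrow> i \<noteq> j \<and> S $ i $ j \<noteq> 0"

end

theory Submission
  imports Defs
begin

text \<open>
  The dual objective f(Sigma) = - ln det Sigma + tr(Sigma K) is strictly convex on positive definite
  matrices. Diagonalising X and Y simultaneously, with generalized eigenvalues lam_i > 0, gives
  ln det Y - ln det X = sum ln lam_i \<le> sum (lam_i - 1) = tr(X^-1 Y) - d, with equality
  only for Y = X; this supporting-hyperplane inequality for - ln det yields strict convexity.

  Let Sigma be the estimate in A(G) and Sigma' any matrix of B(G'), G' the support graph of Sigma.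
  Moving from Sigma towards Sigma', an edge entry with Sigma_ij > 0 stays positive for short steps,
  and an edge entry with Sigma_ij = 0 stays zero since Sigma'_ij = 0 too. So short steps stay in A(G),
  where Sigma is optimal, and convexity of f gives f(Sigma) \<le> f(Sigma'). Strict convexity makes
  the minimiser over the convex model B(G') unique.
\<close>

lemma pos_defD:
  assumes "pos_def A"
  shows "transpose A = A" and "x \<noteq> 0 \<Longrightarrow> 0 < x \<bullet> (A *v x)"
  using assms unfolding pos_def_def by auto

lemma symmetric_inner_matrix_vector_commute:
  fixes A :: "real^'n^'n"
  assumes "transpose A = A"
  shows "x \<bullet> (A *v y) = y \<bullet> (A *v x)"
  by (metis assms dot_lmul_matrix inner_commute vector_transpose_matrix)

lemma pos_def_mat_1: "pos_def (mat 1 :: real^'n^'n)"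
  by (simp add: pos_def_def)

lemma pos_def_diagonal_pos:
  assumes "pos_def (A :: real^'n^'n)"
  shows "0 < A $ i $ i"
  using pos_defD(2)[OF assms, of "axis i 1"]
  by (simp add: matrix_vector_mult_basis column_def inner_axis')

lemma pos_def_left_invertible:
  assumes "pos_def (A :: real^'n^'n)"
  obtains G where "G ** A = mat 1"
proof -
  have "x = 0" if "A *v x = 0" for x
    using pos_defD(2)[OF assms, of x] that by force
  then show thesis
    using matrix_left_invertible_ker that by blast
qed

lemma pos_def_convex_comb:
  fixes X Y :: "real^'n^'n"
  assumes "pos_def X" "pos_def Y" "0 \<le> t" "t \<le> 1"
  shows "pos_def ((1 - t) *\<^sub>R X + t *\<^sub>R Y)"
proof -
  have "transpose ((1 - t) *\<^sub>R X + t *\<^sub>R Y) = (1 - t) *\<^sub>R X + t *\<^sub>R Y"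
    using pos_defD(1)[OF assms(1)] pos_defD(1)[OF assms(2)]
    by (simp add: vec_eq_iff transpose_def)
  moreover have "0 < x \<bullet> (((1 - t) *\<^sub>R X + t *\<^sub>R Y) *v x)" if "x \<noteq> 0" for x
  proof -
    have "0 < x \<bullet> (X *v x)" "0 < x \<bullet> (Y *v x)"
      using pos_defD(2) assms(1,2) that by auto
    then have "0 < (1 - t) * (x \<bullet> (X *v x)) + t * (x \<bullet> (Y *v x))"
      using assms(3,4) by (cases "t = 1") (auto intro: add_pos_nonneg)
    then show ?thesis
      by (simp add: matrix_vector_mult_add_rdistrib scaleR_matrix_vector_assoc[symmetric]
          inner_add_right)
  qed
  ultimately show ?thesis
    unfolding pos_def_def by blast
qed

lemma quadratic_form_add_scaleR:
  fixes A :: "real^'n^'n"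
  assumes "transpose A = A"
  shows "(u + t *\<^sub>R w) \<bullet> (A *v (u + t *\<^sub>R w))
    = u \<bullet> (A *v u) + 2 * t * (w \<bullet> (A *v u)) + t\<^sup>2 * (w \<bullet> (A *v w))"
  using symmetric_inner_matrix_vector_commute[OF assms, of u w]
  by (simp add: matrix_vector_right_distrib matrix_vector_mult_scaleR inner_add_left
      inner_add_right algebra_simps power2_eq_square)

lemma nonneg_quadratic_linear_coeff_eq_0:
  fixes b c :: real
  assumes "\<And>t. 0 \<le> b * t + c * t\<^sup>2"
  shows "b = 0"
proof -
  define d where "d = \<bar>c\<bar> + 1"
  have d: "0 < d" "\<bar>c\<bar> \<le> d"
    unfolding d_def by auto
  define t where "t = - b / (2 * d)"
  have "0 \<le> b * t + c * t\<^sup>2"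
    by (rule assms)
  also have "\<dots> \<le> b * t + d * t\<^sup>2"
    using d by (intro add_left_mono mult_right_mono) auto
  also have "\<dots> = - b\<^sup>2 / (4 * d)"
    using d by (simp add: t_def power2_eq_square field_simps)
  finally show ?thesis
    using d by (simp add: divide_le_0_iff)
qed

lemma rayleigh_quotient_maximizer:
  fixes X Y :: "real^'n^'n"
  assumes "pos_def X" "subspace W" "v0 \<in> W" "v0 \<noteq> 0"
  obtains u where "u \<in> W" "u \<bullet> (X *v u) = 1"
    "\<And>v. v \<in> W \<Longrightarrow> v \<bullet> (Y *v v) \<le> (u \<bullet> (Y *v u)) * (v \<bullet> (X *v v))"
proof -
  define \<rho> where "\<rho> v = (v \<bullet> (Y *v v)) / (v \<bullet> (X *v v))" for v
  define K where "K = sphere (0::real^'n) 1 \<inter> W"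
  have "compact K"
    unfolding K_def using assms(2) by (intro compact_Int_closed compact_sphere closed_subspace)
  moreover have "(1 / norm v0) *\<^sub>R v0 \<in> K"
    unfolding K_def using assms(2-4) by (auto simp: subspace_scale)
  moreover have "continuous_on K \<rho>"
  proof -
    have "v \<bullet> (X *v v) \<noteq> 0" if "v \<in> K" for v
      using that pos_defD(2)[OF assms(1), of v] unfolding K_def by fastforce
    then show ?thesis
      unfolding \<rho>_def
      by (intro continuous_intros linear_continuous_on matrix_vector_mul_linear) auto
  qed
  ultimately obtain u0 where "u0 \<in> K" and u0_max: "\<And>v. v \<in> K \<Longrightarrow> \<rho> v \<le> \<rho> u0"
    using continuous_attains_sup[of K \<rho>] by blast
  then have "u0 \<in> W" "u0 \<noteq> 0"
    unfolding K_def by auto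
  then have "0 < u0 \<bullet> (X *v u0)"
    using pos_defD(2)[OF assms(1)] by blast
  have \<rho>_scale: "\<rho> (c *\<^sub>R v) = \<rho> v" if "c \<noteq> 0" for c v
    unfolding \<rho>_def using that by (simp add: matrix_vector_mult_scaleR power2_eq_square)
  define u where "u = (1 / sqrt (u0 \<bullet> (X *v u0))) *\<^sub>R u0"
  have "u \<in> W"
    unfolding u_def using \<open>u0 \<in> W\<close> assms(2) by (simp add: subspace_scale)
  moreover have uXu: "u \<bullet> (X *v u) = 1"
    unfolding u_def using \<open>0 < u0 \<bullet> (X *v u0)\<close>
    by (simp add: matrix_vector_mult_scaleR power2_eq_square[symmetric])
  moreover have "v \<bullet> (Y *v v) \<le> (u \<bullet> (Y *v u)) * (v \<bullet> (X *v v))" if "v \<in> W" for v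
  proof (cases "v = 0")
    case False
    then have "(1 / norm v) *\<^sub>R v \<in> K"
      unfolding K_def using \<open>v \<in> W\<close> assms(2) by (auto simp: subspace_scale)
    then have "\<rho> v \<le> \<rho> u"
      using u0_max \<rho>_scale \<open>0 < u0 \<bullet> (X *v u0)\<close> False unfolding u_def by fastforce
    moreover have "0 < v \<bullet> (X *v v)"
      using pos_defD(2)[OF assms(1)] False by blast
    ultimately show ?thesis
      unfolding \<rho>_def uXu by (simp add: pos_divide_le_eq)
  qed simp
  ultimately show thesis
    using that by blast
qed

lemma rayleigh_maximizer_stationary:
  fixes X Y :: "real^'n^'n"
  assumes "transpose X = X" "transpose Y = Y" "subspace W" "u \<in> W" "w \<in> W"
    and max: "\<And>v. v \<in> W \<Longrightarrow> v \<bullet> (Y *v v) \<le> \<mu> * (v \<bullet> (X *v v))"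
    and attained: "u \<bullet> (Y *v u) = \<mu> * (u \<bullet> (X *v u))"
  shows "w \<bullet> (Y *v u) = \<mu> * (w \<bullet> (X *v u))"
proof -
  have "0 \<le> 2 * (\<mu> * (w \<bullet> (X *v u)) - w \<bullet> (Y *v u)) * t
      + (\<mu> * (w \<bullet> (X *v w)) - w \<bullet> (Y *v w)) * t\<^sup>2" for t
  proof -
    have "u + t *\<^sub>R w \<in> W"
      using assms(3-5) by (simp add: subspace_add subspace_scale)
    from max[OF this] show ?thesis
      unfolding quadratic_form_add_scaleR[OF assms(1)] quadratic_form_add_scaleR[OF assms(2)]
      using attained by (simp add: algebra_simps)
  qed
  then show ?thesis
    using nonneg_quadratic_linear_coeff_eq_0 by fastforce
qed

lemma exists_nonzero_orthogonal_to_family: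
  fixes a :: "'i \<Rightarrow> real^'n"
  assumes "card I < CARD('n)" "finite I"
  obtains v where "v \<noteq> 0" "\<And>i. i \<in> I \<Longrightarrow> a i \<bullet> v = 0"
proof -
  have "dim (a ` I) < DIM(real^'n)"
    using dim_le_card'[of "a ` I"] card_image_le[OF assms(2), of a] assms by simp
  then obtain v where "v \<noteq> 0" "\<And>y. y \<in> span (a ` I) \<Longrightarrow> orthogonal v y"
    using orthogonal_to_subspace_exists by blast
  then show thesis
    using that by (metis image_eqI inner_commute orthogonal_def span_base)
qed

lemma projection_residual_orthogonal:
  fixes X :: "real^'n^'n"
  assumes orth: "\<And>i j. i \<in> I \<Longrightarrow> j \<in> I \<Longrightarrow> r i \<bullet> (X *v r j) = (if i = j then 1 else 0)"
    and "finite I" "j \<in> I"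
  shows "r j \<bullet> (X *v (z - (\<Sum>i\<in>I. (r i \<bullet> (X *v z)) *\<^sub>R r i))) = 0"
proof -
  have "r j \<bullet> (X *v (\<Sum>i\<in>I. (r i \<bullet> (X *v z)) *\<^sub>R r i))
      = (\<Sum>i\<in>I. (r i \<bullet> (X *v z)) * (r j \<bullet> (X *v r i)))"
    by (simp add: vec.sum matrix_vector_mult_scaleR inner_sum_right)
  also have "\<dots> = (\<Sum>i\<in>I. if i = j then r i \<bullet> (X *v z) else 0)"
    using orth \<open>j \<in> I\<close> by (intro sum.cong) auto
  also have "\<dots> = r j \<bullet> (X *v z)"
    using assms(2,3) by simp
  finally show ?thesis
    by (simp add: matrix_vector_mult_diff_distrib inner_diff_right)
qed

lemma orthogonal_to_family_and_complement_eq_0: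
  fixes X :: "real^'n^'n"
  assumes orth: "\<And>i j. i \<in> I \<Longrightarrow> j \<in> I \<Longrightarrow> r i \<bullet> (X *v r j) = (if i = j then 1 else 0)"
    and "finite I"
    and family: "\<And>i. i \<in> I \<Longrightarrow> r i \<bullet> z = 0"
    and complement: "\<And>w. (\<And>i. i \<in> I \<Longrightarrow> r i \<bullet> (X *v w) = 0) \<Longrightarrow> w \<bullet> z = 0"
  shows "z = 0"
proof -
  define p where "p = (\<Sum>i\<in>I. (r i \<bullet> (X *v z)) *\<^sub>R r i)"
  have "(z - p) \<bullet> z = 0"
    unfolding p_def using projection_residual_orthogonal[OF orth \<open>finite I\<close>] by (rule complement)
  moreover have "p \<bullet> z = 0"
    unfolding p_def using family by (simp add: inner_sum_left)
  ultimately show "z = 0"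
    by (simp add: inner_diff_left)
qed

lemma generalized_eigenvector_extension:
  fixes X Y :: "real^'n^'n" and I :: "'n set"
  assumes "pos_def X" "transpose Y = Y" "I \<noteq> UNIV"
    and orth: "\<And>i j. i \<in> I \<Longrightarrow> j \<in> I \<Longrightarrow> r i \<bullet> (X *v r j) = (if i = j then 1 else 0)"
    and eig: "\<And>i. i \<in> I \<Longrightarrow> Y *v r i = lam i *\<^sub>R (X *v r i)"
  obtains u \<mu> where "u \<bullet> (X *v u) = 1" "\<And>i. i \<in> I \<Longrightarrow> r i \<bullet> (X *v u) = 0"
    "Y *v u = \<mu> *\<^sub>R (X *v u)"
proof -
  have symX: "transpose X = X"
    using pos_defD(1)[OF assms(1)] .
  \<comment> \<open>The new vector maximises the Rayleigh quotient of Y relative to X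
    on the X-orthogonal complement W of the r i.\<close>
  define W where "W = {v. \<forall>i\<in>I. r i \<bullet> (X *v v) = 0}"
  have "subspace W"
    unfolding subspace_def W_def
    by (simp add: matrix_vector_right_distrib matrix_vector_mult_scaleR inner_add_right)
  have "card I < CARD('n)"
    using assms(3) by (intro psubset_card_mono) auto
  then obtain v0 where "v0 \<noteq> 0" "\<And>i. i \<in> I \<Longrightarrow> (X *v r i) \<bullet> v0 = 0"
    using exists_nonzero_orthogonal_to_family[of I "\<lambda>i. X *v r i"] by auto
  then have "v0 \<in> W"
    unfolding W_def by (simp add: symmetric_inner_matrix_vector_commute[OF symX] inner_commute)
  obtain u where "u \<in> W" and uXu: "u \<bullet> (X *v u) = 1"
    and max: "\<And>v. v \<in> W \<Longrightarrow> v \<bullet> (Y *v v) \<le> (u \<bullet> (Y *v u)) * (v \<bullet> (X *v v))"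
    using rayleigh_quotient_maximizer[OF assms(1) \<open>subspace W\<close> \<open>v0 \<in> W\<close> \<open>v0 \<noteq> 0\<close>, where Y = Y]
    by blast
  define \<mu> where "\<mu> = u \<bullet> (Y *v u)"
  define z where "z = Y *v u - \<mu> *\<^sub>R (X *v u)"
  have z_W: "w \<bullet> z = 0" if "w \<in> W" for w
    using rayleigh_maximizer_stationary[OF symX assms(2) \<open>subspace W\<close> \<open>u \<in> W\<close> that, of \<mu>]
      max uXu unfolding \<mu>_def z_def by (simp add: inner_diff_right)
  have z_r: "r i \<bullet> z = 0" if "i \<in> I" for i
  proof -
    have "r i \<bullet> (Y *v u) = u \<bullet> (Y *v r i)"
      by (rule symmetric_inner_matrix_vector_commute[OF assms(2)])
    also have "\<dots> = lam i * (r i \<bullet> (X *v u))"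
      by (simp add: eig[OF that] symmetric_inner_matrix_vector_commute[OF symX, of u])
    finally have "r i \<bullet> (Y *v u) = lam i * (r i \<bullet> (X *v u))" .
    then show ?thesis
      using \<open>u \<in> W\<close> that unfolding W_def z_def by (simp add: inner_diff_right)
  qed
  have "z = 0"
  proof (rule orthogonal_to_family_and_complement_eq_0[OF orth finite z_r])
    show "w \<bullet> z = 0" if "\<And>i. i \<in> I \<Longrightarrow> r i \<bullet> (X *v w) = 0" for w
      using that by (intro z_W) (simp add: W_def)
  qed
  then have "Y *v u = \<mu> *\<^sub>R (X *v u)"
    unfolding z_def by simp
  then show thesis
    using that uXu \<open>u \<in> W\<close> unfolding W_def by blast
qed

lemma simultaneous_diagonalization:
  fixes X Y :: "real^'n^'n"
  assumes "pos_def X" "transpose Y = Y"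
  obtains r :: "'n \<Rightarrow> real^'n" and lam where
    "\<And>i j. r i \<bullet> (X *v r j) = (if i = j then 1 else 0)"
    "\<And>i. Y *v r i = lam i *\<^sub>R (X *v r i)"
proof -
  have "\<exists>r lam. (\<forall>i\<in>I. \<forall>j\<in>I. r i \<bullet> (X *v r j) = (if i = j then 1 else 0))
      \<and> (\<forall>i\<in>I. Y *v r i = lam i *\<^sub>R (X *v r i))" for I :: "'n set"
    using finite[of I]
  proof (induction I rule: finite_induct)
    case (insert k I)
    then obtain r lam
      where orth: "\<forall>i\<in>I. \<forall>j\<in>I. r i \<bullet> (X *v r j) = (if i = j then 1 else 0)"
        and eig: "\<forall>i\<in>I. Y *v r i = lam i *\<^sub>R (X *v r i)"
      by blast
    obtain u \<mu> where uXu: "u \<bullet> (X *v u) = 1" and u_orth: "\<And>i. i \<in> I \<Longrightarrow> r i \<bullet> (X *v u) = 0"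
      and u_eig: "Y *v u = \<mu> *\<^sub>R (X *v u)"
      using generalized_eigenvector_extension[OF assms, of I r lam] orth eig insert.hyps(2)
      by blast
    have u_orth': "u \<bullet> (X *v r i) = 0" if "i \<in> I" for i
      using u_orth[OF that] symmetric_inner_matrix_vector_commute[OF pos_defD(1)[OF assms(1)]]
      by metis
    define r' where "r' = r(k := u)"
    have "r' i \<bullet> (X *v r' j) = (if i = j then 1 else 0)" if "i \<in> insert k I" "j \<in> insert k I" for i j
      using that orth uXu u_orth u_orth' insert.hyps(2) unfolding r'_def
      by (cases "i = k"; cases "j = k") auto
    moreover have "Y *v r' i = (lam(k := \<mu>)) i *\<^sub>R (X *v r' i)" if "i \<in> insert k I" for i
      using that eig u_eig insert.hyps(2) unfolding r'_def by (cases "i = k") auto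
    ultimately show ?case
      by blast
  qed simp
  from this[of UNIV] show thesis
    using that by blast
qed

lemma congruence_entry:
  fixes A :: "real^'n^'n" and r :: "'n \<Rightarrow> real^'n"
  shows "((\<chi> i. r i) ** A ** transpose (\<chi> i. r i)) $ i $ j = r i \<bullet> (A *v r j)"
proof -
  have "((\<chi> i. r i) ** A ** transpose (\<chi> i. r i)) $ i $ j = (((\<chi> i. r i) ** A) *v r j) $ i"
    by (simp add: matrix_matrix_mult_def matrix_vector_mult_def transpose_def)
  also have "\<dots> = r i \<bullet> (A *v r j)"
    by (simp add: matrix_vector_mul_assoc[symmetric] matrix_vector_mul_component)
  finally show ?thesis .
qed

lemma pos_def_simultaneous_congruence:
  fixes X Y :: "real^'n^'n"
  assumes "pos_def X" "pos_def Y"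
  obtains Q :: "real^'n^'n" and lam :: "'n \<Rightarrow> real" where "\<And>i. 0 < lam i"
    "Q ** X ** transpose Q = mat 1" "Q ** Y ** transpose Q = (\<chi> i j. if i = j then lam i else 0)"
proof -
  obtain r :: "'n \<Rightarrow> real^'n" and lam
    where orth: "\<And>i j. r i \<bullet> (X *v r j) = (if i = j then 1 else 0)"
      and eig: "\<And>i. Y *v r i = lam i *\<^sub>R (X *v r i)"
    using simultaneous_diagonalization[OF assms(1) pos_defD(1)[OF assms(2)]] by blast
  have "0 < lam i" for i
  proof -
    have "r i \<noteq> 0"
      using orth[of i i] by auto
    then have "0 < r i \<bullet> (Y *v r i)"
      using pos_defD(2)[OF assms(2)] by blast
    then show ?thesis
      using eig[of i] orth[of i i] by simp
  qed
  moreover have "(\<chi> i. r i) ** X ** transpose (\<chi> i. r i) = mat 1"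
    by (simp add: vec_eq_iff congruence_entry orth mat_def)
  moreover have "(\<chi> i. r i) ** Y ** transpose (\<chi> i. r i) = (\<chi> i j. if i = j then lam i else 0)"
    by (simp add: vec_eq_iff congruence_entry eig orth)
  ultimately show thesis
    by (rule that)
qed

lemma pos_def_pair_eigenvalues:
  fixes X Y G :: "real^'n^'n"
  assumes "pos_def X" "pos_def Y" "G ** X = mat 1"
  obtains lam :: "'n \<Rightarrow> real" where "\<And>i. 0 < lam i" "det Y = det X * (\<Prod>i\<in>UNIV. lam i)"
    "trace (G ** Y) = (\<Sum>i\<in>UNIV. lam i)" "(\<forall>i. lam i = 1) \<longrightarrow> Y = X"
proof -
  define D :: "('n \<Rightarrow> real) \<Rightarrow> real^'n^'n" where "D lam = (\<chi> i j. if i = j then lam i else 0)" for lam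
  obtain Q lam where lam_pos: "\<And>i. 0 < lam i"
    and QXQ: "Q ** X ** transpose Q = mat 1" and QYQ: "Q ** Y ** transpose Q = D lam"
    using pos_def_simultaneous_congruence[OF assms(1,2)] unfolding D_def by blast
  define M where "M = transpose Q ** Q"
  have MX: "M ** X = mat 1"
    using QXQ matrix_left_right_inverse unfolding M_def by (metis matrix_mul_assoc)
  then have XM: "X ** M = mat 1"
    using matrix_left_right_inverse by blast
  have "G = M"
    by (metis XM assms(3) matrix_mul_assoc matrix_mul_lid matrix_mul_rid)
  then have "trace (G ** Y) = trace (D lam)"
    unfolding M_def QYQ[symmetric] by (metis matrix_mul_assoc trace_mul_sym)
  also have "\<dots> = (\<Sum>i\<in>UNIV. lam i)"
    unfolding D_def trace_def by simp
  finally have trace_eq: "trace (G ** Y) = (\<Sum>i\<in>UNIV. lam i)" .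
  have "(det Q)\<^sup>2 * det X = 1"
    using arg_cong[OF QXQ, of det] by (simp add: det_mul det_transpose power2_eq_square mult_ac)
  moreover have "(det Q)\<^sup>2 * det Y = (\<Prod>i\<in>UNIV. lam i)"
    using arg_cong[OF QYQ, of det] unfolding D_def
    by (simp add: det_mul det_transpose det_diagonal power2_eq_square mult_ac)
  ultimately have "det Y = det X * (\<Prod>i\<in>UNIV. lam i)"
    by (metis mult.assoc mult.commute mult_1)
  moreover have "Y = X" if "\<forall>i. lam i = 1"
  proof -
    have "D lam = mat 1"
      using that unfolding D_def by (simp add: vec_eq_iff mat_def)
    then have "M ** Y ** M = M"
      unfolding M_def using QYQ by (metis matrix_mul_assoc matrix_mul_lid matrix_mul_rid)
    then have "X ** (M ** Y ** M) ** X = X ** M ** X"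
      by simp
    then show "Y = X"
      by (simp add: matrix_mul_assoc XM) (simp add: matrix_mul_assoc[symmetric] XM MX)
  qed
  ultimately show thesis
    using that[of lam] lam_pos trace_eq by blast
qed

lemma pos_def_det_pos:
  assumes "pos_def (A :: real^'n^'n)"
  shows "0 < det A"
proof -
  obtain lam :: "'n \<Rightarrow> real" where "\<And>i. 0 < lam i" "det A = det (mat 1 :: real^'n^'n) * prod lam UNIV"
    using pos_def_pair_eigenvalues[OF pos_def_mat_1 assms matrix_mul_lid] by blast
  then show ?thesis
    by (simp add: prod_pos)
qed

lemma ln_det_less_trace:
  fixes X Y G :: "real^'n^'n"
  assumes "pos_def X" "pos_def Y" "G ** X = mat 1" "Y \<noteq> X"
  shows "ln (det Y) - ln (det X) < trace (G ** Y) - CARD('n)"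
proof -
  obtain lam :: "'n \<Rightarrow> real" where lam_pos: "\<And>i. 0 < lam i"
    and det_eq: "det Y = det X * (\<Prod>i\<in>UNIV. lam i)"
    and trace_eq: "trace (G ** Y) = (\<Sum>i\<in>UNIV. lam i)"
    and "(\<forall>i. lam i = 1) \<longrightarrow> Y = X"
    using pos_def_pair_eigenvalues[OF assms(1-3)] by blast
  then obtain k where "lam k \<noteq> 1"
    using assms(4) by blast
  have "ln (det Y) - ln (det X) = (\<Sum>i\<in>UNIV. ln (lam i))"
    using pos_def_det_pos[OF assms(1)] lam_pos
    by (simp add: det_eq ln_mult prod_pos ln_prod less_imp_neq[symmetric])
  also have "\<dots> < (\<Sum>i\<in>UNIV. lam i - 1)"
  proof (rule sum_strict_mono_ex1)
    show "\<forall>i\<in>UNIV. ln (lam i) \<le> lam i - 1"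
      using lam_pos ln_le_minus_one by blast
    have "ln (lam k) < lam k - 1"
      using lam_pos[of k] \<open>lam k \<noteq> 1\<close> ln_le_minus_one[of "lam k"] ln_eq_minus_one[of "lam k"]
      by (auto simp: order_le_less)
    then show "\<exists>i\<in>UNIV. ln (lam i) < lam i - 1"
      by blast
  qed simp
  also have "\<dots> = trace (G ** Y) - CARD('n)"
    unfolding trace_eq sum_subtractf by simp
  finally show ?thesis .
qed

lemma ln_det_le_trace:
  fixes X Y G :: "real^'n^'n"
  assumes "pos_def X" "pos_def Y" "G ** X = mat 1"
  shows "ln (det Y) - ln (det X) \<le> trace (G ** Y) - CARD('n)"
  using ln_det_less_trace[OF assms] assms(3) by (cases "Y = X") (auto simp: trace_I)

lemma trace_scaleR: "trace (c *\<^sub>R A) = c * trace (A :: real^'n^'n)"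
  by (simp add: trace_def sum_distrib_left)

lemma trace_convex_comb_mult:
  fixes X Y K :: "real^'n^'n"
  shows "trace (K ** ((1 - t) *\<^sub>R X + t *\<^sub>R Y)) = (1 - t) * trace (K ** X) + t * trace (K ** Y)"
  by (simp add: matrix_add_ldistrib matrix_scalar_ac scalar_matrix_assoc[symmetric] trace_add trace_scaleR)

lemma dual_obj_strictly_convex:
  fixes X Y K :: "real^'n^'n"
  assumes "pos_def X" "pos_def Y" "X \<noteq> Y" "0 < t" "t < 1"
  shows "dual_obj K ((1 - t) *\<^sub>R X + t *\<^sub>R Y) < (1 - t) * dual_obj K X + t * dual_obj K Y"
proof -
  define Z where "Z = (1 - t) *\<^sub>R X + t *\<^sub>R Y"
  have "pos_def Z"
    unfolding Z_def using assms by (intro pos_def_convex_comb) auto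
  then obtain G where G: "G ** Z = mat 1"
    by (rule pos_def_left_invertible)
  have "X \<noteq> Z"
    using assms(3,4) unfolding Z_def by (auto simp: algebra_simps)
  \<comment> \<open>Supporting-hyperplane inequality of - ln det at Z, applied to X and to Y.\<close>
  have "(1 - t) * (ln (det X) - ln (det Z)) + t * (ln (det Y) - ln (det Z))
      < (1 - t) * (trace (G ** X) - CARD('n)) + t * (trace (G ** Y) - CARD('n))"
  proof (rule add_less_le_mono)
    show "(1 - t) * (ln (det X) - ln (det Z)) < (1 - t) * (trace (G ** X) - CARD('n))"
      using ln_det_less_trace[OF \<open>pos_def Z\<close> assms(1) G \<open>X \<noteq> Z\<close>] assms(5) by simp
    show "t * (ln (det Y) - ln (det Z)) \<le> t * (trace (G ** Y) - CARD('n))"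
      using ln_det_le_trace[OF \<open>pos_def Z\<close> assms(2) G] assms(4) by simp
  qed
  also have "\<dots> = trace (G ** Z) - CARD('n)"
    unfolding Z_def trace_convex_comb_mult by (simp add: algebra_simps)
  also have "\<dots> = 0"
    using G by (simp add: trace_I)
  finally have "(1 - t) * (ln (det X) - ln (det Z)) + t * (ln (det Y) - ln (det Z)) < 0" .
  moreover have "trace (Z ** K) = (1 - t) * trace (X ** K) + t * trace (Y ** K)"
    unfolding Z_def trace_mul_sym[of _ K] trace_convex_comb_mult ..
  ultimately show ?thesis
    unfolding dual_obj_def Z_def[symmetric] by (simp add: algebra_simps)
qed

lemma dual_obj_convex:
  fixes X Y K :: "real^'n^'n"
  assumes "pos_def X" "pos_def Y" "0 \<le> t" "t \<le> 1"
  shows "dual_obj K ((1 - t) *\<^sub>R X + t *\<^sub>R Y) \<le> (1 - t) * dual_obj K X + t * dual_obj K Y"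
proof -
  consider "X = Y" | "t = 0" | "t = 1" | "X \<noteq> Y" "0 < t" "t < 1"
    using assms(3,4) by fastforce
  then show ?thesis
  proof cases
    case 1
    then have "(1 - t) *\<^sub>R X + t *\<^sub>R Y = X"
      by (simp flip: scaleR_add_left)
    with 1 show ?thesis
      by (simp add: algebra_simps)
  next
    case 4
    then show ?thesis
      using dual_obj_strictly_convex[OF assms(1,2)] by (simp add: less_imp_le)
  qed simp_all
qed

lemma B_model_supp_graph_self:
  assumes "pos_def S"
  shows "B_model (supp_graph S) S"
  using assms unfolding B_model_def supp_graph_def by auto

lemma B_model_convex_comb:
  assumes "B_model H X" "B_model H Y" "0 \<le> t" "t \<le> 1"
  shows "B_model H ((1 - t) *\<^sub>R X + t *\<^sub>R Y)"
  using assms pos_def_convex_comb unfolding B_model_def by auto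

lemma eventually_A_model_segment:
  assumes "A_model E S" "B_model (supp_graph S) S'"
  shows "\<forall>\<^sub>F t in at_right 0. A_model E ((1 - t) *\<^sub>R S + t *\<^sub>R S')"
proof -
  have "pos_def S" "pos_def S'"
    using assms unfolding A_model_def B_model_def by auto
  have "\<forall>\<^sub>F t in at_right 0. E i j \<longrightarrow> 0 \<le> (1 - t) * S $ i $ j + t * S' $ i $ j" for i j
  proof (cases "S $ i $ j = 0")
    case True
    have "i \<noteq> j"
      using True pos_def_diagonal_pos[OF \<open>pos_def S\<close>, of i] by auto
    then have "S' $ i $ j = 0"
      using True assms(2) unfolding B_model_def supp_graph_def by auto
    with True show ?thesis
      by simp
  next
    case False
    show ?thesis
    proof (cases "E i j")
      case True
      then have "0 < S $ i $ j"
        using False assms(1) unfolding A_model_def by force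
      moreover have "((\<lambda>t. (1 - t) * S $ i $ j + t * S' $ i $ j) \<longlongrightarrow> S $ i $ j) (at_right 0)"
        by (auto intro!: tendsto_eq_intros)
      ultimately have "\<forall>\<^sub>F t in at_right 0. 0 < (1 - t) * S $ i $ j + t * S' $ i $ j"
        by (rule order_tendstoD(1)[rotated])
      then show ?thesis
        by (rule eventually_mono) simp
    qed simp
  qed
  then have "\<forall>\<^sub>F t in at_right 0. \<forall>i j. E i j \<longrightarrow> 0 \<le> (1 - t) * S $ i $ j + t * S' $ i $ j"
    by (intro eventually_all_finite)
  moreover have "\<forall>\<^sub>F t in at_right (0::real). 0 \<le> t \<and> t \<le> 1"
    by (rule eventually_at_rightI[of 0 1]) auto
  ultimately show ?thesis
    unfolding A_model_def
    by eventually_elim (use \<open>pos_def S\<close> \<open>pos_def S'\<close> pos_def_convex_comb in auto)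
qed

lemma dual_est_A_model_le_B_model:
  assumes "is_dual_est (A_model E) K S" "B_model (supp_graph S) S'"
  shows "dual_obj K S \<le> dual_obj K S'"
proof -
  have "A_model E S" and opt: "\<And>S''. A_model E S'' \<Longrightarrow> dual_obj K S \<le> dual_obj K S''"
    using assms(1) unfolding is_dual_est_def by auto
  have "\<forall>\<^sub>F t in at_right (0::real). 0 < t \<and> t < 1"
    by (rule eventually_at_rightI[of 0 1]) auto
  then have "\<forall>\<^sub>F t in at_right 0. (0 < t \<and> t < 1) \<and> A_model E ((1 - t) *\<^sub>R S + t *\<^sub>R S')"
    using eventually_A_model_segment[OF \<open>A_model E S\<close> assms(2)] by (rule eventually_conj)
  then obtain t where t: "0 < t" "t < 1" and "A_model E ((1 - t) *\<^sub>R S + t *\<^sub>R S')"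
    using eventually_happens'[OF trivial_limit_at_right_real] by blast
  have "dual_obj K S \<le> dual_obj K ((1 - t) *\<^sub>R S + t *\<^sub>R S')"
    by (rule opt) fact
  also have "\<dots> \<le> (1 - t) * dual_obj K S + t * dual_obj K S'"
    using \<open>A_model E S\<close> assms(2) t unfolding A_model_def B_model_def
    by (intro dual_obj_convex) auto
  finally show ?thesis
    using t by (simp add: algebra_simps)
qed

lemma is_dual_est_unique:
  assumes convex: "\<And>X Y t. C X \<Longrightarrow> C Y \<Longrightarrow> 0 \<le> t \<Longrightarrow> t \<le> 1 \<Longrightarrow> C ((1 - t) *\<^sub>R X + t *\<^sub>R Y)"
    and pos: "\<And>X. C X \<Longrightarrow> pos_def X"
    and X: "is_dual_est C K X" and Y: "is_dual_est C K Y"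
  shows "X = Y"
proof (rule ccontr)
  assume "X \<noteq> Y"
  have "C X" "C Y" "dual_obj K X = dual_obj K Y"
    using X Y unfolding is_dual_est_def by (auto intro: order.antisym)
  then have "dual_obj K X \<le> dual_obj K ((1 - 1/2) *\<^sub>R X + (1/2) *\<^sub>R Y)"
    using X convex[of X Y "1/2"] unfolding is_dual_est_def by auto
  also have "\<dots> < (1 - 1/2) * dual_obj K X + (1/2) * dual_obj K Y"
    using \<open>C X\<close> \<open>C Y\<close> \<open>X \<noteq> Y\<close> by (intro dual_obj_strictly_convex pos) auto
  finally show False
    using \<open>dual_obj K X = dual_obj K Y\<close> by simp
qed

theorem corollary5p2:
  fixes E :: "'n::finite \<Rightarrow> 'n \<Rightarrow> bool"
    and S Khat Scheck :: "real^'n^'n"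
  assumes "simple_graph E"
    and "pos_semidef S"
    and "is_MLE E S Khat"
    and "is_dual_est (A_model E) Khat Scheck"
  shows "is_dual_est (B_model (supp_graph Scheck)) Khat Scheck
       \<and> (\<forall>S'. is_dual_est (B_model (supp_graph Scheck)) Khat S' \<longrightarrow> S' = Scheck)"
proof -
  have "A_model E Scheck"
    using assms(4) unfolding is_dual_est_def by blast
  then have "B_model (supp_graph Scheck) Scheck"
    unfolding A_model_def by (blast intro: B_model_supp_graph_self)
  then have est: "is_dual_est (B_model (supp_graph Scheck)) Khat Scheck"
    unfolding is_dual_est_def using dual_est_A_model_le_B_model[OF assms(4)] by blast
  moreover have "S' = Scheck" if "is_dual_est (B_model (supp_graph Scheck)) Khat S'" for S'
    using is_dual_est_unique[OF B_model_convex_comb _ that est] unfolding B_model_def by blast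
  ultimately show ?thesis
    by blast
qed

end
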